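(* Let $X$ be a finite discrete space with at least two elements, $\Gamma$ a nonempty countable set, $\varphi:\Gamma\to\Gamma$ a map. If $(X^\Gamma,\sigma_\varphi)$ is dense distributional chaotic, then $\varphi$ has no periodic point.
   Context: $X^\Gamma$ has the product topology and a fixed compatible metric $d$; $\sigma_\varphi((x_\alpha)_{\alpha\in\Gamma})=(x_{\varphi(\alpha)})_{\alpha\in\Gamma}$. With $f=\sigma_\varphi$, $\xi(x,y,t,n)=\#\{i\in\{0,\dots,n-1\}:d(f^i(x),f^i(y))<t\}$, $F_{xy}(t)=\liminf_n\xi(x,y,t,n)/n$, $F^*_{xy}(t)=\limsup_n\xi(x,y,t,n)/n$. The system is dense distributional chaotic if there exist a dense uncountable set $A\subseteq X^\Gamma$ and $\varepsilon>0$ such that for all distinct $x,y\in A$: $F^*_{xy}(s)=1$ for every $s>0$ and $F_{xy}(\varepsilon)=0$. *)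

theory Defs
  imports "HOL-Analysis.Analysis"
begin

definition gshift :: "'b set \<Rightarrow> ('b \<Rightarrow> 'b) \<Rightarrow> ('b \<Rightarrow> 'a) \<Rightarrow> ('b \<Rightarrow> 'a)" where
  "gshift \<Gamma> \<phi> x = (\<lambda>\<alpha>\<in>\<Gamma>. x (\<phi> \<alpha>))"

definition xi :: "('c \<Rightarrow> 'c \<Rightarrow> real) \<Rightarrow> ('c \<Rightarrow> 'c) \<Rightarrow> 'c \<Rightarrow> 'c \<Rightarrow> real \<Rightarrow> nat \<Rightarrow> nat" where
  "xi d f x y t n = card {i. i < n \<and> d ((f ^^ i) x) ((f ^^ i) y) < t}"

definition F_lower :: "('c \<Rightarrow> 'c \<Rightarrow> real) \<Rightarrow> ('c \<Rightarrow> 'c) \<Rightarrow> 'c \<Rightarrow> 'c \<Rightarrow> real \<Rightarrow> ereal" where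
  "F_lower d f x y t = liminf (\<lambda>n. ereal (real (xi d f x y t n) / real n))"

definition F_upper :: "('c \<Rightarrow> 'c \<Rightarrow> real) \<Rightarrow> ('c \<Rightarrow> 'c) \<Rightarrow> 'c \<Rightarrow> 'c \<Rightarrow> real \<Rightarrow> ereal" where
  "F_upper d f x y t = limsup (\<lambda>n. ereal (real (xi d f x y t n) / real n))"

definition dense_distributional_chaotic ::
  "'c topology \<Rightarrow> ('c \<Rightarrow> 'c \<Rightarrow> real) \<Rightarrow> ('c \<Rightarrow> 'c) \<Rightarrow> bool" where
  "dense_distributional_chaotic T d f \<longleftrightarrow>
     (\<exists>A \<epsilon>. A \<subseteq> topspace T \<and> T closure_of A = topspace T \<and> uncountable A \<and> \<epsilon> > 0 \<and>
        (\<forall>x\<in>A. \<forall>y\<in>A. x \<noteq> y \<longrightarrow>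
           (\<forall>s>0. F_upper d f x y s = 1) \<and> F_lower d f x y \<epsilon> = 0))"

definition has_periodic_point :: "'b set \<Rightarrow> ('b \<Rightarrow> 'b) \<Rightarrow> bool" where
  "has_periodic_point \<Gamma> \<phi> \<longleftrightarrow> (\<exists>\<alpha>\<in>\<Gamma>. \<exists>n>0. (\<phi> ^^ n) \<alpha> = \<alpha>)"

end

theory Submission
  imports Defs
begin

text \<open>If \<open>\<alpha>\<close> is a periodic point of \<open>\<phi>\<close> with period \<open>n\<close>, the \<open>\<alpha>\<close>-coordinate of
  \<open>\<sigma>\<^sub>\<phi>\<^sup>i x\<close> is \<open>x \<alpha>\<close> whenever \<open>n\<close> divides \<open>i\<close>. A dense set contains two points \<open>x, y\<close>
  with \<open>x \<alpha> \<noteq> y \<alpha>\<close>, and by compactness (a Lebesgue number of the cover by the cylinders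
  \<open>{z. z \<alpha> = c}\<close>) points closer than some \<open>\<delta>\<close> share their \<open>\<alpha>\<close>-coordinate. So the orbits of
  \<open>x\<close> and \<open>y\<close> are \<open>\<delta>\<close>-apart at least once in every \<open>n\<close> steps, and the upper density of
  their \<open>\<delta>\<close>-close times is at most \<open>1 - 1/n < 1\<close>.\<close>

lemma card_lessThan_le_mult_card_multiples:
  fixes n N :: nat
  assumes "n > 0"
  shows "N \<le> n * card {i. i < N \<and> n dvd i}"
proof -
  let ?B = "{i. i < N \<and> n dvd i}"
  have "{..<N} \<subseteq> (\<Union>m\<in>?B. {m..<m + n})"
  proof
    fix i assume "i \<in> {..<N}"
    moreover have "i - i mod n = n * (i div n)" by (rule minus_mod_eq_mult_div)
    moreover have "i = n * (i div n) + i mod n" by simp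
    ultimately have "i - i mod n \<in> ?B" "i \<in> {i - i mod n..<i - i mod n + n}"
      using mod_less_divisor[OF assms, of i] by auto
    then show "i \<in> (\<Union>m\<in>?B. {m..<m + n})" by blast
  qed
  then have "card {..<N} \<le> card (\<Union>m\<in>?B. {m..<m + n})"
    by (intro card_mono) auto
  also have "\<dots> \<le> (\<Sum>m\<in>?B. card {m..<m + n})" by (rule card_UN_le) simp
  also have "\<dots> = n * card ?B" by simp
  finally show ?thesis by simp
qed

lemma F_upper_le_of_far_at_multiples:
  assumes "n > 0"
    and far: "\<And>i. n dvd i \<Longrightarrow> \<not> d ((f ^^ i) x) ((f ^^ i) y) < \<delta>"
  shows "F_upper d f x y \<delta> \<le> ereal (1 - 1 / real n)"
  unfolding F_upper_def
proof (rule Limsup_bounded, intro always_eventually allI)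
  fix N
  let ?G = "{i. i < N \<and> d ((f ^^ i) x) ((f ^^ i) y) < \<delta>}"
  let ?B = "{i. i < N \<and> n dvd i}"
  have "?G \<union> ?B \<subseteq> {..<N}" "?G \<inter> ?B = {}" using far by auto
  then have "card ?G + card ?B \<le> N"
    using card_mono[of "{..<N}" "?G \<union> ?B"] by (simp add: card_Un_disjoint)
  then have "n * card ?G + n * card ?B \<le> n * N"
    unfolding add_mult_distrib2[symmetric] by (rule mult_le_mono2)
  moreover have "N \<le> n * card ?B" by (rule card_lessThan_le_mult_card_multiples[OF assms(1)])
  ultimately have "n * card ?G + N \<le> n * N" by linarith
  then have "real n * real (card ?G) \<le> real n * real N - real N"
    by (simp flip: of_nat_mult of_nat_add)
  then have "real (card ?G) \<le> (1 - 1 / real n) * real N"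
    using assms(1) by (simp add: field_simps)
  then show "ereal (real (xi d f x y \<delta> N) / real N) \<le> ereal (1 - 1 / real n)"
    unfolding xi_def by (cases "N = 0") (auto simp: divide_le_eq)
qed

context Metric_space
begin

lemma compact_continuous_map_discrete_uniformly_constant:
  assumes "compact_space mtopology" and "continuous_map mtopology (discrete_topology Y) g"
  obtains \<delta> where "\<delta> > 0" "\<And>z w. z \<in> M \<Longrightarrow> w \<in> M \<Longrightarrow> d z w < \<delta> \<Longrightarrow> g z = g w"
proof -
  let ?U = "(\<lambda>c. {z \<in> M. g z = c}) ` Y"
  have gY: "g z \<in> Y" if "z \<in> M" for z
    using continuous_map_image_subset_topspace[OF assms(2)] that by auto
  have "openin mtopology {z \<in> M. g z = c}" if "c \<in> Y" for c
    using openin_continuous_map_preimage[OF assms(2), of "{c}"] that by auto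
  then have "\<And>V. V \<in> ?U \<Longrightarrow> openin mtopology V" by blast
  moreover have "M \<subseteq> \<Union> ?U" using gY by blast
  moreover have "compactin mtopology M" using assms(1) by (simp add: compact_space_def)
  ultimately have "\<exists>\<delta>>0. \<forall>z\<in>M. \<exists>V\<in>?U. mball z \<delta> \<subseteq> V"
    by (intro lebesgue_number)
  then obtain \<delta> where "\<delta> > 0" and \<delta>: "\<forall>z\<in>M. \<exists>V\<in>?U. mball z \<delta> \<subseteq> V"
    by blast
  moreover have "g z = g w" if "z \<in> M" "w \<in> M" "d z w < \<delta>" for z w
  proof -
    obtain c where "mball z \<delta> \<subseteq> {z \<in> M. g z = c}" using \<delta> \<open>z \<in> M\<close> by blast
    moreover have "z \<in> mball z \<delta>" "w \<in> mball z \<delta>" using that \<open>\<delta> > 0\<close> by auto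
    ultimately show ?thesis by blast
  qed
  ultimately show ?thesis using that by blast
qed

end

lemma funpow_mult_eq_self:
  assumes "(f ^^ n) x = x"
  shows "(f ^^ (n * k)) x = x"
  by (induction k) (simp_all add: funpow_add assms)

lemma funpow_gshift_apply:
  assumes "\<phi> \<in> \<Gamma> \<rightarrow> \<Gamma>" "\<beta> \<in> \<Gamma>"
  shows "(gshift \<Gamma> \<phi> ^^ i) x \<beta> = x ((\<phi> ^^ i) \<beta>)"
  using assms(2)
proof (induction i arbitrary: \<beta>)
  case (Suc i)
  have "(gshift \<Gamma> \<phi> ^^ Suc i) x \<beta> = (gshift \<Gamma> \<phi> ^^ i) x (\<phi> \<beta>)"
    using Suc.prems by (simp add: gshift_def)
  also have "\<dots> = x ((\<phi> ^^ Suc i) \<beta>)"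
    using Suc assms(1) by (simp add: Pi_iff funpow_swap1)
  finally show ?case .
qed simp

lemma funpow_gshift_apply_periodic:
  assumes "\<phi> \<in> \<Gamma> \<rightarrow> \<Gamma>" "\<alpha> \<in> \<Gamma>" "(\<phi> ^^ n) \<alpha> = \<alpha>" "n dvd i"
  shows "(gshift \<Gamma> \<phi> ^^ i) x \<alpha> = x \<alpha>"
  using assms(4) funpow_mult_eq_self[OF assms(3)]
  by (auto elim!: dvdE simp: funpow_gshift_apply[OF assms(1,2)])

lemma gshift_in_PiE:
  assumes "\<phi> \<in> \<Gamma> \<rightarrow> \<Gamma>" "x \<in> PiE \<Gamma> (\<lambda>_. X)"
  shows "gshift \<Gamma> \<phi> x \<in> PiE \<Gamma> (\<lambda>_. X)"
  using assms unfolding gshift_def by (auto simp: restrict_PiE_iff PiE_mem)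

lemma funpow_gshift_in_PiE:
  assumes "\<phi> \<in> \<Gamma> \<rightarrow> \<Gamma>" "x \<in> PiE \<Gamma> (\<lambda>_. X)"
  shows "(gshift \<Gamma> \<phi> ^^ i) x \<in> PiE \<Gamma> (\<lambda>_. X)"
  by (induction i) (simp_all add: gshift_in_PiE assms)

lemma dense_in_product_discrete_meets_coordinate:
  assumes "product_topology (\<lambda>_. discrete_topology X) \<Gamma> closure_of A = PiE \<Gamma> (\<lambda>_. X)"
    and "\<alpha> \<in> \<Gamma>" "c \<in> X"
  obtains x where "x \<in> A" "x \<alpha> = c"
proof -
  let ?T = "product_topology (\<lambda>_. discrete_topology X) \<Gamma>"
  let ?U = "{z \<in> topspace ?T. z \<alpha> \<in> {c}}"
  have U: "openin ?T ?U"
    by (rule openin_continuous_map_preimage[OF continuous_map_product_projection[OF assms(2)]])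
      (use assms(3) in simp)
  have "(\<lambda>\<beta>\<in>\<Gamma>. c) \<in> ?T closure_of A" "(\<lambda>\<beta>\<in>\<Gamma>. c) \<in> ?U"
    using assms by auto
  then obtain x where "x \<in> A" "x \<in> ?U"
    using U by (meson in_closure_of)
  then show ?thesis by (auto intro: that)
qed

theorem lemma4p1:
  fixes X :: "'a set" and \<Gamma> :: "'b set" and \<phi> :: "'b \<Rightarrow> 'b"
    and d :: "('b \<Rightarrow> 'a) \<Rightarrow> ('b \<Rightarrow> 'a) \<Rightarrow> real"
  assumes "finite X" and "card X \<ge> 2"
    and "\<Gamma> \<noteq> {}" and "countable \<Gamma>"
    and "\<phi> \<in> \<Gamma> \<rightarrow> \<Gamma>"
    and "Metric_space (PiE \<Gamma> (\<lambda>_. X)) d"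
    and "Metric_space.mtopology (PiE \<Gamma> (\<lambda>_. X)) d
           = product_topology (\<lambda>_. discrete_topology X) \<Gamma>"
    and "dense_distributional_chaotic
           (product_topology (\<lambda>_. discrete_topology X) \<Gamma>) d (gshift \<Gamma> \<phi>)"
  shows "\<not> has_periodic_point \<Gamma> \<phi>"
proof
  assume "has_periodic_point \<Gamma> \<phi>"
  then obtain \<alpha> n where \<alpha>: "\<alpha> \<in> \<Gamma>" and n: "n > 0" "(\<phi> ^^ n) \<alpha> = \<alpha>"
    unfolding has_periodic_point_def by blast
  let ?M = "PiE \<Gamma> (\<lambda>_. X)" and ?T = "product_topology (\<lambda>_. discrete_topology X) \<Gamma>"
  let ?f = "gshift \<Gamma> \<phi>"
  obtain A where A: "A \<subseteq> ?M" "?T closure_of A = ?M"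
    and chaos: "\<And>x y s. x \<in> A \<Longrightarrow> y \<in> A \<Longrightarrow> x \<noteq> y \<Longrightarrow> s > 0 \<Longrightarrow> F_upper d ?f x y s = 1"
    using assms(8) unfolding dense_distributional_chaotic_def by auto
  obtain B where "B \<subseteq> X" "card B = 2" using assms(2) by (rule obtain_subset_with_card_n)
  then obtain a b where "a \<in> X" "b \<in> X" "a \<noteq> b" by (auto simp: card_2_iff)
  then obtain x y where xy: "x \<in> A" "y \<in> A" "x \<alpha> \<noteq> y \<alpha>"
    using dense_in_product_discrete_meets_coordinate[OF A(2) \<alpha>] by metis
  interpret Metric_space ?M d by (rule assms(6))
  have "compact_space mtopology"
    using assms(1,7) by (simp add: compact_space_product_topology compact_space_discrete_topology)
  moreover have "continuous_map mtopology (discrete_topology X) (\<lambda>z. z \<alpha>)"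
    using continuous_map_product_projection[OF \<alpha>] assms(7) by simp
  ultimately obtain \<delta> where "\<delta> > 0"
    and \<delta>: "\<And>z w. z \<in> ?M \<Longrightarrow> w \<in> ?M \<Longrightarrow> d z w < \<delta> \<Longrightarrow> z \<alpha> = w \<alpha>"
    by (rule compact_continuous_map_discrete_uniformly_constant) blast
  have far: "\<not> d ((?f ^^ i) x) ((?f ^^ i) y) < \<delta>" if "n dvd i" for i
  proof
    assume "d ((?f ^^ i) x) ((?f ^^ i) y) < \<delta>"
    moreover have "(?f ^^ i) x \<in> ?M" "(?f ^^ i) y \<in> ?M"
      using xy(1,2) A(1) by (auto intro!: funpow_gshift_in_PiE[OF assms(5)])
    ultimately have "(?f ^^ i) x \<alpha> = (?f ^^ i) y \<alpha>" using \<delta> by blast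
    with xy(3) show False
      by (simp add: funpow_gshift_apply_periodic[OF assms(5) \<alpha> n(2) that])
  qed
  have "F_upper d ?f x y \<delta> \<le> ereal (1 - 1 / real n)"
    by (rule F_upper_le_of_far_at_multiples[where d = d and f = ?f and x = x and y = y,
          OF n(1) far])
  moreover have "F_upper d ?f x y \<delta> = 1" using chaos xy \<open>\<delta> > 0\<close> by metis
  ultimately show False using n(1) by (simp add: one_ereal_def)
qed

end
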